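(* Let $(S,V)$ be a complete semiring-semimodule pair, let $n\ge1$, let $\Gamma$ be an alphabet, and let $M\in (S^{n\times n})^{\Gamma^*\times\Gamma^*}$ be a pushdown transition matrix. Then for all $p\in\Gamma$ and $0\le l\le n$, $$(M^{\omega,l})_p=\sum_{p'\in\Gamma}(A_M)_{p,p'}\,(M^{\omega,l})_{p'}.$$
   Context: A complete semiring-semimodule pair $(S,V)$ (in the sense of Ésik and Kuich, "Modern Automata Theory") consists of a complete starsemiring $S$ (arbitrary sums with infinite associativity/commutativity/distributivity laws, star $s^*=\sum_{j\ge0}s^j$) and a complete $S$-semimodule $V$, with infinite products $\prod_{j\ge1}s_j\in V$ of sequences in $S$ satisfying the axioms of that framework. $M\in (S^{n\times n})^{\Gamma^*\times\Gamma^*}$ (a $\Gamma^*\times\Gamma^*$ matrix with $n\times n$ blocks over $S$) is a pushdown transition matrix if (i) for each $p\in\Gamma$ only finitely many blocks $M_{p,\pi}$ are nonzero, and (ii) $M_{\pi_1,\pi_2}=M_{p,\pi}$ if $\pi_1=p\pi'$, $\pi_2=\pi\pi'$ for some $p\in\Gamma$, $\pi,\pi'\in\Gamma^*$, and $0$ otherwise. $M^*=\sum_{m\ge0}M^m$ with blocks $(M^* )_{\pi,\pi'}$. Let $P_l=\{(j_1,j_2,\dots)\in\{1,\dots,n\}^\omega\mid j_t\le l\text{ for infinitely many }t\}$; $M^{\omega,l}\in (V^n)^{\Gamma^*}$ is given by $((M^{\omega,l})_\pi)_i=\sum_{\pi_1,\pi_2,\ldots\in\Gamma^*}\sum_{(j_1,j_2,\ldots)\in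 P_l}(M_{\pi,\pi_1})_{i,j_1}(M_{\pi_1,\pi_2})_{j_1,j_2}\cdots$ (sum of weights of infinite paths from $(\pi,i)$ visiting states $\le l$ infinitely often). For $p,p'\in\Gamma$, $$(A_M)_{p,p'}=\sum_{\substack{\pi=p_1\dots p_k\in\Gamma^+,\ 1\le j\le k\\ p_j=p'}}M_{p,\pi}\,(M^* )_{p_1,\epsilon}\cdots(M^* )_{p_{j-1},\epsilon}\in S^{n\times n}.$$ *)

theory Defs
  imports Main "HOL-Library.Countable"
begin

text \<open>Complete sums are taken over families indexed by subsets of a fixed index
  type ix (of the cardinality of the continuum).\<close>

type_synonym ix = "nat \<Rightarrow> nat"

definition seq_enc :: "(nat \<Rightarrow> ix) \<Rightarrow> ix" where
  "seq_enc \<sigma> = (\<lambda>k. \<sigma> (fst (prod_decode k)) (snd (prod_decode k)))"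

definition seq_dec :: "ix \<Rightarrow> nat \<Rightarrow> ix" where
  "seq_dec x j = (\<lambda>m. x (prod_encode (j, m)))"

definition complete_monoid :: "((ix \<Rightarrow> 'a::comm_monoid_add) \<Rightarrow> ix set \<Rightarrow> 'a) \<Rightarrow> bool" where
  "complete_monoid cs \<longleftrightarrow>
     (\<forall>f g I. (\<forall>i\<in>I. f i = g i) \<longrightarrow> cs f I = cs g I) \<and>
     (\<forall>f. cs f {} = 0) \<and>
     (\<forall>f j. cs f {j} = f j) \<and>
     (\<forall>f j k. j \<noteq> k \<longrightarrow> cs f {j, k} = f j + f k) \<and>
     (\<forall>f (I :: ix \<Rightarrow> ix set) J.
        (\<forall>j\<in>J. \<forall>j'\<in>J. j \<noteq> j' \<longrightarrow> I j \<inter> I j' = {}) \<longrightarrow>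
        cs f (\<Union>j\<in>J. I j) = cs (\<lambda>j. cs f (I j)) J)"

definition complete_semiring :: "((ix \<Rightarrow> 'a::semiring_1) \<Rightarrow> ix set \<Rightarrow> 'a) \<Rightarrow> bool" where
  "complete_semiring cs \<longleftrightarrow> complete_monoid cs \<and>
     (\<forall>a f I. a * cs f I = cs (\<lambda>i. a * f i) I) \<and>
     (\<forall>a f I. cs f I * a = cs (\<lambda>i. f i * a) I)"

definition complete_semimodule ::
  "((ix \<Rightarrow> 's::semiring_1) \<Rightarrow> ix set \<Rightarrow> 's) \<Rightarrow> ((ix \<Rightarrow> 'v::comm_monoid_add) \<Rightarrow> ix set \<Rightarrow> 'v)
   \<Rightarrow> ('s \<Rightarrow> 'v \<Rightarrow> 'v) \<Rightarrow> bool" where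
  "complete_semimodule csS csV smult \<longleftrightarrow> complete_monoid csV \<and>
     (\<forall>s v w. smult s (v + w) = smult s v + smult s w) \<and>
     (\<forall>s t v. smult (s + t) v = smult s v + smult t v) \<and>
     (\<forall>s t v. smult (s * t) v = smult s (smult t v)) \<and>
     (\<forall>v. smult 1 v = v) \<and>
     (\<forall>v. smult 0 v = 0) \<and>
     (\<forall>s. smult s 0 = 0) \<and>
     (\<forall>s f I. smult s (csV f I) = csV (\<lambda>i. smult s (f i)) I) \<and>
     (\<forall>f I v. smult (csS f I) v = csV (\<lambda>i. smult (f i) v) I)"

text \<open>Complete semiring-semimodule pair (Esik-Kuich): infprod s is the
  infinite product of the sequence s 0, s 1, s 2, ...\<close>
definition complete_ssp ::
  "((ix \<Rightarrow> 's::semiring_1) \<Rightarrow> ix set \<Rightarrow> 's) \<Rightarrow> ((ix \<Rightarrow> 'v::comm_monoid_add) \<Rightarrow> ix set \<Rightarrow> 'v)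
   \<Rightarrow> ('s \<Rightarrow> 'v \<Rightarrow> 'v) \<Rightarrow> ((nat \<Rightarrow> 's) \<Rightarrow> 'v) \<Rightarrow> bool" where
  "complete_ssp csS csV smult infprod \<longleftrightarrow>
     complete_semiring csS \<and> complete_semimodule csS csV smult \<and>
     (\<forall>s. infprod s = smult (s 0) (infprod (\<lambda>j. s (Suc j)))) \<and>
     (\<forall>s (ns :: nat \<Rightarrow> nat). strict_mono ns \<and> ns 0 = 0 \<longrightarrow>
        infprod s = infprod (\<lambda>j. prod_list (map s [ns j..<ns (Suc j)]))) \<and>
     (\<forall>(s :: nat \<Rightarrow> ix \<Rightarrow> 's) (I :: nat \<Rightarrow> ix set).
        infprod (\<lambda>j. csS (s j) (I j)) =
        csV (\<lambda>x. infprod (\<lambda>j. s j (seq_dec x j))) (seq_enc ` {\<sigma>. \<forall>j. \<sigma> j \<in> I j}))"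

definition cenc :: "'c::countable \<Rightarrow> ix" where
  "cenc x = (\<lambda>_. to_nat x)"

definition Csum :: "((ix \<Rightarrow> 'a) \<Rightarrow> ix set \<Rightarrow> 'a) \<Rightarrow> ('c::countable \<Rightarrow> 'a) \<Rightarrow> 'c set \<Rightarrow> 'a" where
  "Csum cs f A = cs (\<lambda>i. f (from_nat (i 0))) (cenc ` A)"

definition senc :: "(nat \<Rightarrow> 'c::countable) \<Rightarrow> ix" where
  "senc \<sigma> = (\<lambda>k. to_nat (\<sigma> k))"

definition Ssum :: "((ix \<Rightarrow> 'a) \<Rightarrow> ix set \<Rightarrow> 'a) \<Rightarrow> ((nat \<Rightarrow> 'c::countable) \<Rightarrow> 'a)
   \<Rightarrow> (nat \<Rightarrow> 'c) set \<Rightarrow> 'a" where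
  "Ssum cs f A = cs (\<lambda>i. f (\<lambda>k. from_nat (i k))) (senc ` A)"

text \<open>A \<Gamma>*\<times>\<Gamma>* matrix with n\<times>n blocks over S is represented as
  M :: 'g list \<Rightarrow> 'g list \<Rightarrow> nat \<Rightarrow> nat \<Rightarrow> 's, where M \<pi>1 \<pi>2 i j is the (i,j) entry
  (1 \<le> i, j \<le> n) of the block M_{\<pi>1,\<pi>2}. The alphabet \<Gamma> is the finite type 'g.\<close>

definition pushdown_tm :: "nat \<Rightarrow> ('g::finite list \<Rightarrow> 'g list \<Rightarrow> nat \<Rightarrow> nat \<Rightarrow> 's::semiring_1) \<Rightarrow> bool" where
  "pushdown_tm n M \<longleftrightarrow>
     (\<forall>p. finite {\<pi>. \<exists>i\<in>{1..n}. \<exists>j\<in>{1..n}. M [p] \<pi> i j \<noteq> 0}) \<and>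
     (\<forall>p \<pi> \<pi>'. \<forall>i\<in>{1..n}. \<forall>j\<in>{1..n}. M (p # \<pi>') (\<pi> @ \<pi>') i j = M [p] \<pi> i j) \<and>
     (\<forall>\<pi>1 \<pi>2. (\<nexists>p \<pi> \<pi>'. \<pi>1 = p # \<pi>' \<and> \<pi>2 = \<pi> @ \<pi>') \<longrightarrow>
        (\<forall>i\<in>{1..n}. \<forall>j\<in>{1..n}. M \<pi>1 \<pi>2 i j = 0))"

fun mpow :: "((ix \<Rightarrow> 's::semiring_1) \<Rightarrow> ix set \<Rightarrow> 's) \<Rightarrow> nat
   \<Rightarrow> ('g::finite list \<Rightarrow> 'g list \<Rightarrow> nat \<Rightarrow> nat \<Rightarrow> 's) \<Rightarrow> nat
   \<Rightarrow> 'g list \<Rightarrow> 'g list \<Rightarrow> nat \<Rightarrow> nat \<Rightarrow> 's" where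
  "mpow cs n M 0 \<pi> \<pi>' i j = (if \<pi> = \<pi>' \<and> i = j then 1 else 0)"
| "mpow cs n M (Suc m) \<pi> \<pi>' i j =
     Csum cs (\<lambda>(\<rho>, k). M \<pi> \<rho> i k * mpow cs n M m \<rho> \<pi>' k j) (UNIV \<times> {1..n})"

definition mstar :: "((ix \<Rightarrow> 's::semiring_1) \<Rightarrow> ix set \<Rightarrow> 's) \<Rightarrow> nat
   \<Rightarrow> ('g::finite list \<Rightarrow> 'g list \<Rightarrow> nat \<Rightarrow> nat \<Rightarrow> 's)
   \<Rightarrow> 'g list \<Rightarrow> 'g list \<Rightarrow> nat \<Rightarrow> nat \<Rightarrow> 's" where
  "mstar cs n M \<pi> \<pi>' i j = Csum cs (\<lambda>m. mpow cs n M m \<pi> \<pi>' i j) (UNIV :: nat set)"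

definition mmul :: "nat \<Rightarrow> (nat \<Rightarrow> nat \<Rightarrow> 's::semiring_1) \<Rightarrow> (nat \<Rightarrow> nat \<Rightarrow> 's) \<Rightarrow> nat \<Rightarrow> nat \<Rightarrow> 's" where
  "mmul n A B i j = (\<Sum>k\<in>{1..n}. A i k * B k j)"

definition mone :: "nat \<Rightarrow> nat \<Rightarrow> 's::semiring_1" where
  "mone i j = (if i = j then 1 else 0)"

definition mprod :: "nat \<Rightarrow> (nat \<Rightarrow> nat \<Rightarrow> 's::semiring_1) list \<Rightarrow> nat \<Rightarrow> nat \<Rightarrow> 's" where
  "mprod n As = foldr (mmul n) As mone"

text \<open>(A_M)_{p,p'} = sum over \<pi> = p_1...p_k \<in> \<Gamma>^+ and 1 \<le> j \<le> k with p_j = p' of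
  M_{p,\<pi>} (M^*)_{p_1,\<epsilon>} ... (M^*)_{p_{j-1},\<epsilon>}.\<close>
definition AM :: "((ix \<Rightarrow> 's::semiring_1) \<Rightarrow> ix set \<Rightarrow> 's) \<Rightarrow> nat
   \<Rightarrow> ('g::finite list \<Rightarrow> 'g list \<Rightarrow> nat \<Rightarrow> nat \<Rightarrow> 's) \<Rightarrow> 'g \<Rightarrow> 'g \<Rightarrow> nat \<Rightarrow> nat \<Rightarrow> 's" where
  "AM cs n M p p' i j =
     Csum cs (\<lambda>(\<pi>, t). mprod n (M [p] \<pi> # map (\<lambda>q. mstar cs n M [q] []) (take (t - 1) \<pi>)) i j)
       {(\<pi>, t). \<pi> \<noteq> [] \<and> 1 \<le> t \<and> t \<le> length \<pi> \<and> \<pi> ! (t - 1) = p'}"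

text \<open>Infinite paths: \<sigma> t = (\<pi>_{t+1}, j_{t+1}); the weight sequence starting at (\<pi>, i).\<close>
definition path_weight :: "('g list \<Rightarrow> 'g list \<Rightarrow> nat \<Rightarrow> nat \<Rightarrow> 's)
   \<Rightarrow> 'g list \<Rightarrow> nat \<Rightarrow> (nat \<Rightarrow> 'g list \<times> nat) \<Rightarrow> nat \<Rightarrow> 's" where
  "path_weight M \<pi> i \<sigma> t =
     (if t = 0 then M \<pi> (fst (\<sigma> 0)) i (snd (\<sigma> 0))
      else M (fst (\<sigma> (t - 1))) (fst (\<sigma> t)) (snd (\<sigma> (t - 1))) (snd (\<sigma> t)))"

text \<open>((M^{\<omega>,l})_\<pi>)_i: sum of weights of infinite paths from (\<pi>, i) whose state
  sequence lies in P_l.\<close>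
definition momega :: "((ix \<Rightarrow> 'v) \<Rightarrow> ix set \<Rightarrow> 'v) \<Rightarrow> ((nat \<Rightarrow> 's) \<Rightarrow> 'v) \<Rightarrow> nat
   \<Rightarrow> ('g::finite list \<Rightarrow> 'g list \<Rightarrow> nat \<Rightarrow> nat \<Rightarrow> 's) \<Rightarrow> nat \<Rightarrow> 'g list \<Rightarrow> nat \<Rightarrow> 'v" where
  "momega csV infprod n M l \<pi> i =
     Ssum csV (\<lambda>\<sigma>. infprod (path_weight M \<pi> i \<sigma>))
       {\<sigma>. (\<forall>t. snd (\<sigma> t) \<in> {1..n}) \<and> infinite {t. snd (\<sigma> t) \<le> l}}"

end

theory Submission
  imports Defs "HOL-Library.Infinite_Set"
begin

(* Splitting off the first step gives
   (M^{omega,l})_p = sum over pi of M_{p,pi} (M^{omega,l})_pi. A path starting from a stack q w either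
   never reaches the stack w, in which case it stays above w and, with w stripped, is a path from q
   that never empties its stack; or it reaches w for the first time after m+1 steps, and these first
   segments are, up to stripping w, exactly the paths of length m+1 from q to the empty stack that
   carry nonzero weight. Summing over m yields
   (M^{omega,l})_{q w} = (M^{omega,l})_q + (M star)_{q,eps} (M^{omega,l})_w,
   and unrolling this along pi = p_1 ... p_k produces the sum defining A_M. *)

section \<open>Complete sums\<close>

lemma complete_monoidD:
  assumes "complete_monoid cs"
  shows complete_monoid_cong: "(\<And>i. i \<in> A \<Longrightarrow> f i = g i) \<Longrightarrow> cs f A = cs g A"
    and complete_monoid_empty: "cs f {} = 0"
    and complete_monoid_singleton: "cs f {j} = f j"
    and complete_monoid_pair: "j \<noteq> k \<Longrightarrow> cs f {j, k} = f j + f k"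
    and complete_monoid_UN_disjoint: "(\<And>j j'. j \<in> J \<Longrightarrow> j' \<in> J \<Longrightarrow> j \<noteq> j' \<Longrightarrow> I j \<inter> I j' = {})
          \<Longrightarrow> cs f (\<Union>j\<in>J. I j) = cs (\<lambda>j. cs f (I j)) J"
  using assms unfolding complete_monoid_def
  by (elim conjE; simp add: Ball_def; fail)+

lemma complete_monoid_neutral:
  assumes cm: "complete_monoid cs" and zero: "\<And>i. i \<in> I \<Longrightarrow> f i = 0"
  shows "cs f I = 0"
proof -
  have "cs f (\<Union>j\<in>I. {}) = cs (\<lambda>j. cs f {}) I"
    by (rule complete_monoid_UN_disjoint[OF cm]) auto
  also have "\<dots> = cs f I"
    using zero by (intro complete_monoid_cong[OF cm]) (simp add: complete_monoid_empty[OF cm])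
  finally show ?thesis by (simp add: complete_monoid_empty[OF cm])
qed

lemma complete_monoid_reindex:
  assumes cm: "complete_monoid cs" and inj: "inj_on h A"
  shows "cs f (h ` A) = cs (\<lambda>i. f (h i)) A"
proof -
  have "h ` A = (\<Union>j\<in>A. {h j})" by blast
  also have "cs f \<dots> = cs (\<lambda>j. cs f {h j}) A"
    using inj by (intro complete_monoid_UN_disjoint[OF cm]) (auto dest: inj_onD)
  finally show ?thesis by (simp add: complete_monoid_singleton[OF cm])
qed

definition ix_cons :: "nat \<Rightarrow> ix \<Rightarrow> ix" where
  "ix_cons b i = (\<lambda>k. case k of 0 \<Rightarrow> b | Suc k' \<Rightarrow> i k')"

lemma ix_cons_eq_iff: "ix_cons b i = ix_cons b' i' \<longleftrightarrow> b = b' \<and> i = i'"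
proof
  assume eq: "ix_cons b i = ix_cons b' i'"
  have "ix_cons b i (Suc k) = ix_cons b' i' (Suc k)" for k using eq by simp
  thus "b = b' \<and> i = i'" using fun_cong[OF eq, of 0] by (auto simp: ix_cons_def)
qed simp

lemma ix_cons_simps [simp]: "ix_cons b i 0 = b" "(\<lambda>k. ix_cons b i (Suc k)) = i"
  by (simp_all add: ix_cons_def)

text \<open>Additivity is not an axiom: it follows by summing over two tagged copies of I,
  grouped once by elements of I and once by copies.\<close>
lemma complete_monoid_add:
  assumes cm: "complete_monoid cs"
  shows "cs (\<lambda>i. f i + g i) I = cs f I + cs g I"
proof -
  define h where "h j = (if j 0 = 0 then f (\<lambda>k. j (Suc k)) else g (\<lambda>k. j (Suc k)))" for j :: ix
  define c :: "nat \<Rightarrow> ix" where "c b = (\<lambda>_. b)" for b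
  have "cs (\<lambda>i. f i + g i) I = cs (\<lambda>i. cs h {ix_cons 0 i, ix_cons 1 i}) I"
    by (intro complete_monoid_cong[OF cm]) (simp add: complete_monoid_pair[OF cm] ix_cons_eq_iff h_def)
  also have "\<dots> = cs h (\<Union>i\<in>I. {ix_cons 0 i, ix_cons 1 i})"
    by (rule complete_monoid_UN_disjoint[OF cm, symmetric]) (auto simp: ix_cons_eq_iff)
  also have "(\<Union>i\<in>I. {ix_cons 0 i, ix_cons 1 i}) = (\<Union>j\<in>{c 0, c 1}. ix_cons (j 0) ` I)"
    by (auto simp: c_def)
  also have "cs h \<dots> = cs (\<lambda>j. cs h (ix_cons (j 0) ` I)) {c 0, c 1}"
    by (rule complete_monoid_UN_disjoint[OF cm]) (auto simp: ix_cons_eq_iff c_def)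
  also have "\<dots> = cs h (ix_cons 0 ` I) + cs h (ix_cons 1 ` I)"
    by (subst complete_monoid_pair[OF cm]) (auto simp: c_def dest: fun_cong)
  also have "\<dots> = cs f I + cs g I"
    by (simp add: complete_monoid_reindex[OF cm] inj_on_def ix_cons_eq_iff h_def)
  finally show ?thesis .
qed

text \<open>A complete sum over an arbitrary index set A, transported to ix along an encoding e;
  it is meaningful when e is injective on A.\<close>
definition esum :: "((ix \<Rightarrow> 'a) \<Rightarrow> ix set \<Rightarrow> 'a) \<Rightarrow> ('b \<Rightarrow> ix) \<Rightarrow> ('b \<Rightarrow> 'a) \<Rightarrow> 'b set \<Rightarrow> 'a" where
  "esum cs e f A = cs (\<lambda>i. f (inv_into A e i)) (e ` A)"

lemma esum_cong:
  assumes "complete_monoid cs" and "\<And>x. x \<in> A \<Longrightarrow> f x = g x"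
  shows "esum cs e f A = esum cs e g A"
  unfolding esum_def
  by (rule complete_monoid_cong[OF assms(1)]) (metis assms(2) inv_into_into)

lemma esum_neutral:
  assumes "complete_monoid cs" and "\<And>x. x \<in> A \<Longrightarrow> f x = 0"
  shows "esum cs e f A = 0"
  unfolding esum_def
  by (rule complete_monoid_neutral[OF assms(1)]) (metis assms(2) inv_into_into)

lemma esum_empty: "complete_monoid cs \<Longrightarrow> esum cs e f {} = 0"
  by (simp add: esum_def complete_monoid_empty)

lemma esum_singleton: "complete_monoid cs \<Longrightarrow> esum cs e f {x} = f x"
  by (simp add: esum_def complete_monoid_singleton)

lemma esum_pair:
  assumes cm: "complete_monoid cs" and "x \<noteq> y" and inj: "inj_on e {x, y}"
  shows "esum cs e f {x, y} = f x + f y"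
proof -
  have "e x \<noteq> e y" using assms by (auto dest: inj_onD)
  thus ?thesis using inj by (simp add: esum_def complete_monoid_pair[OF cm])
qed

lemma esum_add: "complete_monoid cs \<Longrightarrow> esum cs e (\<lambda>x. f x + g x) A = esum cs e f A + esum cs e g A"
  unfolding esum_def
  by (fact complete_monoid_add[of cs "\<lambda>i. f (inv_into A e i)" "\<lambda>i. g (inv_into A e i)"])

lemma esum_reindex_bij_betw:
  assumes cm: "complete_monoid cs" and inj: "inj_on e A" and inj': "inj_on e' B"
    and h: "bij_betw h A B" and fg: "\<And>x. x \<in> A \<Longrightarrow> g (h x) = f x"
  shows "esum cs e f A = esum cs e' g B"
proof -
  define k where "k = (\<lambda>i. e' (h (inv_into A e i)))"
  have hA: "h ` A = B" and inj_h: "inj_on h A" using h by (auto simp: bij_betw_def)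
  have img: "e' ` B = k ` (e ` A)"
    unfolding k_def hA[symmetric] using inj by (auto simp: image_image)
  have "inj_on k (e ` A)"
  proof (rule inj_onI)
    fix a b assume "a \<in> e ` A" "b \<in> e ` A" "k a = k b"
    then obtain x y where "x \<in> A" "y \<in> A" "a = e x" "b = e y" "e' (h x) = e' (h y)"
      using inj by (auto simp: k_def)
    thus "a = b" using inj' inj_h hA by (auto dest: inj_onD)
  qed
  hence "esum cs e' g B = cs (\<lambda>i. g (inv_into B e' (k i))) (e ` A)"
    by (simp add: esum_def img complete_monoid_reindex[OF cm])
  also have "\<dots> = esum cs e f A"
    unfolding esum_def
  proof (rule complete_monoid_cong[OF cm])
    fix i assume "i \<in> e ` A"
    then obtain x where "x \<in> A" "i = e x" by blast
    thus "g (inv_into B e' (k i)) = f (inv_into A e i)"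
      using inj inj' hA fg by (auto simp: k_def)
  qed
  finally show ?thesis ..
qed

lemma esum_reindex:
  "complete_monoid cs \<Longrightarrow> inj_on e (h ` A) \<Longrightarrow> inj_on e' A \<Longrightarrow> inj_on h A
    \<Longrightarrow> esum cs e f (h ` A) = esum cs e' (\<lambda>x. f (h x)) A"
  by (rule esum_reindex_bij_betw[where h=h, symmetric]) (auto simp: bij_betw_def)

lemma esum_UN_disjoint:
  assumes cm: "complete_monoid cs" and inj: "inj_on e (\<Union>(B ` A))" and inj1: "inj_on e1 A"
    and disj: "\<And>a b. a \<in> A \<Longrightarrow> b \<in> A \<Longrightarrow> a \<noteq> b \<Longrightarrow> B a \<inter> B b = {}"
  shows "esum cs e f (\<Union>a\<in>A. B a) = esum cs e1 (\<lambda>a. esum cs e f (B a)) A"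
proof -
  define U where "U = (\<Union>a\<in>A. B a)"
  define F where "F = (\<lambda>i. f (inv_into U e i))"
  define I where "I = (\<lambda>j. e ` B (inv_into A e1 j))"
  have U: "e ` U = (\<Union>j\<in>e1 ` A. I j)" unfolding U_def I_def using inj1 by auto
  have "cs F (\<Union>j\<in>e1 ` A. I j) = cs (\<lambda>j. cs F (I j)) (e1 ` A)"
  proof (rule complete_monoid_UN_disjoint[OF cm])
    fix j j' assume "j \<in> e1 ` A" "j' \<in> e1 ` A" "j \<noteq> j'"
    then obtain a b where ab: "a \<in> A" "b \<in> A" "a \<noteq> b" "j = e1 a" "j' = e1 b" by blast
    show "I j \<inter> I j' = {}"
    proof (rule ccontr)
      assume "I j \<inter> I j' \<noteq> {}"
      then obtain x y where "x \<in> B a" "y \<in> B b" "e x = e y"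
        using ab inj1 by (auto simp: I_def)
      thus False using inj disj[OF ab(1-3)] ab by (auto dest: inj_onD)
    qed
  qed
  hence "esum cs e f U = cs (\<lambda>j. cs F (I j)) (e1 ` A)" unfolding esum_def F_def[symmetric] U .
  also have "\<dots> = esum cs e1 (\<lambda>a. esum cs e f (B a)) A"
    unfolding esum_def
  proof (rule complete_monoid_cong[OF cm])
    fix j assume "j \<in> e1 ` A"
    then obtain a where a: "a \<in> A" "inv_into A e1 j = a" using inj1 by auto
    have "inj_on e (B a)" using inj a by (auto intro: inj_on_subset)
    thus "cs F (I j) = cs (\<lambda>i. f (inv_into (B (inv_into A e1 j)) e i)) (e ` B (inv_into A e1 j))"
      unfolding a I_def using inj a
      by (intro complete_monoid_cong[OF cm]) (auto simp: F_def U_def, metis UN_I inv_into_f_f)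
  qed
  finally show ?thesis unfolding U_def .
qed

lemma esum_union_disjoint:
  assumes cm: "complete_monoid cs" and inj: "inj_on e (A \<union> B)" and disj: "A \<inter> B = {}"
  shows "esum cs e f (A \<union> B) = esum cs e f A + esum cs e f B"
proof -
  define c :: "bool \<Rightarrow> ix" where "c b = (\<lambda>_. if b then 1 else 0)" for b
  have inj_c: "inj_on c X" for X unfolding inj_on_def c_def fun_eq_iff by auto
  define D where "D b = (if b then A else B)" for b
  have U: "A \<union> B = (\<Union>b\<in>{True, False}. D b)" by (auto simp: D_def)
  have "esum cs e f (\<Union>b\<in>{True, False}. D b) = esum cs c (\<lambda>b. esum cs e f (D b)) {True, False}"
  proof (rule esum_UN_disjoint[OF cm _ inj_c])
    show "inj_on e (\<Union>(D ` {True, False}))" using inj U by simp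
  next
    fix a b assume "a \<in> {True, False}" "b \<in> {True, False}" "a \<noteq> b"
    thus "D a \<inter> D b = {}" using disj by (cases a; cases b) (auto simp: D_def)
  qed
  also have "\<dots> = esum cs e f A + esum cs e f B"
    by (subst esum_pair[OF cm _ inj_c]) (simp_all add: D_def)
  finally show ?thesis using U by simp
qed

lemma esum_eq_sum:
  assumes cm: "complete_monoid cs" and "finite A" and "inj_on e A"
  shows "esum cs e f A = sum f A"
  using assms(2,3)
proof (induction A rule: finite_induct)
  case (insert x A)
  hence "esum cs e f ({x} \<union> A) = esum cs e f {x} + esum cs e f A"
    by (intro esum_union_disjoint[OF cm]) auto
  thus ?case using insert by (simp add: esum_singleton[OF cm])
qed (simp add: esum_empty[OF cm])

lemma esum_sum_commute:
  assumes cm: "complete_monoid cs" and "finite Y"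
  shows "esum cs e (\<lambda>x. \<Sum>y\<in>Y. f x y) A = (\<Sum>y\<in>Y. esum cs e (\<lambda>x. f x y) A)"
  using assms(2)
  by (induction Y rule: finite_induct) (simp_all add: esum_neutral[OF cm] esum_add[OF cm])

lemma esum_mono_neutral_right:
  assumes cm: "complete_monoid cs" and inj: "inj_on e A" and "B \<subseteq> A"
    and zero: "\<And>x. x \<in> A - B \<Longrightarrow> f x = 0"
  shows "esum cs e f A = esum cs e f B"
proof -
  have "esum cs e f (B \<union> (A - B)) = esum cs e f B + esum cs e f (A - B)"
    using inj \<open>B \<subseteq> A\<close> by (intro esum_union_disjoint[OF cm]) (auto intro: inj_on_subset)
  moreover have "esum cs e f (A - B) = 0" by (rule esum_neutral[OF cm zero])
  ultimately show ?thesis using \<open>B \<subseteq> A\<close> by (simp add: Un_absorb1)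
qed

lemma inj_on_cenc: "inj_on cenc A"
  by (auto simp: inj_on_def cenc_def dest: fun_cong)

lemma inj_on_senc: "inj_on senc A"
  by (auto simp: inj_on_def senc_def fun_eq_iff)

lemma Csum_eq_esum:
  assumes "complete_monoid cs" shows "Csum cs f A = esum cs cenc f A"
  unfolding Csum_def esum_def
proof (rule complete_monoid_cong[OF assms])
  fix i assume "i \<in> cenc ` A"
  then obtain x where "x \<in> A" "i = cenc x" by blast
  thus "f (from_nat (i 0)) = f (inv_into A cenc i)"
    by (simp add: inv_into_f_f[OF inj_on_cenc]) (simp add: cenc_def)
qed

lemma Ssum_eq_esum:
  assumes "complete_monoid cs" shows "Ssum cs f A = esum cs senc f A"
  unfolding Ssum_def esum_def
proof (rule complete_monoid_cong[OF assms])
  fix i assume "i \<in> senc ` A"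
  then obtain x where "x \<in> A" "i = senc x" by blast
  thus "f (\<lambda>k. from_nat (i k)) = f (inv_into A senc i)"
    by (simp add: inv_into_f_f[OF inj_on_senc]) (simp add: senc_def)
qed

lemma esum_Sigma:
  assumes cm: "complete_monoid cs"
  shows "esum cs cenc f (Sigma A B) = esum cs cenc (\<lambda>a. esum cs cenc (\<lambda>b. f (a, b)) (B a)) A"
proof -
  have "Sigma A B = (\<Union>a\<in>A. Pair a ` B a)" by auto
  also have "esum cs cenc f \<dots> = esum cs cenc (\<lambda>a. esum cs cenc f (Pair a ` B a)) A"
    by (rule esum_UN_disjoint[OF cm inj_on_cenc inj_on_cenc]) auto
  also have "\<dots> = esum cs cenc (\<lambda>a. esum cs cenc (\<lambda>b. f (a, b)) (B a)) A"
    by (rule esum_cong[OF cm], rule esum_reindex[OF cm inj_on_cenc inj_on_cenc]) (simp add: inj_on_def)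
  finally show ?thesis .
qed

section \<open>Paths and their weights\<close>

type_synonym 'g config = "'g list \<times> nat"

definition omega_paths :: "nat \<Rightarrow> nat \<Rightarrow> (nat \<Rightarrow> 'g config) set" where
  "omega_paths n l = {\<sigma>. (\<forall>t. snd (\<sigma> t) \<in> {1..n}) \<and> infinite {t. snd (\<sigma> t) \<le> l}}"

definition finite_paths :: "nat \<Rightarrow> nat \<Rightarrow> 'g config list set" where
  "finite_paths n m = {\<alpha>. length \<alpha> = m \<and> (\<forall>x\<in>set \<alpha>. snd x \<in> {1..n})}"

definition finite_weight ::
  "('g list \<Rightarrow> 'g list \<Rightarrow> nat \<Rightarrow> nat \<Rightarrow> 's::semiring_1) \<Rightarrow> 'g list \<Rightarrow> nat \<Rightarrow> 'g config list \<Rightarrow> 's" where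
  "finite_weight M \<pi> i \<alpha> = prod_list (map (path_weight M \<pi> i (nth \<alpha>)) [0..<length \<alpha>])"

definition path_end :: "'g list \<Rightarrow> nat \<Rightarrow> 'g config list \<Rightarrow> 'g config" where
  "path_end \<pi> i \<alpha> = (if \<alpha> = [] then (\<pi>, i) else last \<alpha>)"

definition prepend :: "'g config list \<Rightarrow> (nat \<Rightarrow> 'g config) \<Rightarrow> nat \<Rightarrow> 'g config" where
  "prepend \<alpha> \<tau> = (\<lambda>t. if t < length \<alpha> then \<alpha> ! t else \<tau> (t - length \<alpha>))"

lemma path_weight_cong:
  "\<sigma> t = \<sigma>' t \<Longrightarrow> (0 < t \<Longrightarrow> \<sigma> (t - 1) = \<sigma>' (t - 1)) \<Longrightarrow>
   path_weight M \<pi> i \<sigma> t = path_weight M \<pi> i \<sigma>' t"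
  unfolding path_weight_def by (cases t) auto

lemma path_weight_shift:
  "path_weight M \<pi> i \<sigma> (t + Suc m)
    = path_weight M (fst (\<sigma> m)) (snd (\<sigma> m)) (\<lambda>t. \<sigma> (t + Suc m)) t"
  unfolding path_weight_def by (cases t) auto

lemma finite_weight_Nil [simp]: "finite_weight M \<pi> i [] = 1"
  by (simp add: finite_weight_def)

lemma finite_weight_Cons:
  "finite_weight M \<pi> i (x # \<beta>) = M \<pi> (fst x) i (snd x) * finite_weight M (fst x) (snd x) \<beta>"
proof -
  have "map (path_weight M \<pi> i (nth (x # \<beta>))) [0..<length (x # \<beta>)]
      = M \<pi> (fst x) i (snd x) # map (path_weight M (fst x) (snd x) (nth \<beta>)) [0..<length \<beta>]"
    using path_weight_shift[of M \<pi> i "nth (x # \<beta>)" _ 0]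
    by (simp add: map_upt_Suc del: upt_Suc) (simp add: path_weight_def)
  thus ?thesis by (simp add: finite_weight_def)
qed

lemma finite_weight_map_prefix:
  "finite_weight M \<pi> i (map \<sigma> [0..<m]) = prod_list (map (path_weight M \<pi> i \<sigma>) [0..<m])"
  unfolding finite_weight_def by (auto intro!: arg_cong[where f=prod_list] path_weight_cong)

lemma prod_list_eq_zero: "(0::'a::semiring_1) \<in> set xs \<Longrightarrow> prod_list xs = 0"
  by (induction xs) auto

lemma finite_weight_eq_zero:
  "t < length \<alpha> \<Longrightarrow> path_weight M \<pi> i (nth \<alpha>) t = 0 \<Longrightarrow> finite_weight M \<pi> i \<alpha> = 0"
  unfolding finite_weight_def by (rule prod_list_eq_zero) force

lemma path_end_Cons: "path_end \<pi> i (x # \<beta>) = path_end (fst x) (snd x) \<beta>"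
  by (cases \<beta>) (auto simp: path_end_def)

lemma path_end_eq_nth: "length \<alpha> = Suc m \<Longrightarrow> path_end \<pi> i \<alpha> = \<alpha> ! m"
  by (auto simp: path_end_def last_conv_nth)

lemma prepend_prefix: "map (prepend \<alpha> \<tau>) [0..<length \<alpha>] = \<alpha>"
  by (rule nth_equalityI) (auto simp: prepend_def)

lemma prepend_shift: "(\<lambda>t. prepend \<alpha> \<tau> (t + length \<alpha>)) = \<tau>"
  by (auto simp: prepend_def)

lemma prepend_map_prefix: "prepend (map \<sigma> [0..<m]) (\<lambda>t. \<sigma> (t + m)) = \<sigma>"
  by (auto simp: prepend_def)

lemma infinite_shift_iff: "infinite {t. P (t + m)} \<longleftrightarrow> infinite {t::nat. P t}"
  unfolding INFM_iff_infinite[symmetric] INFM_nat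
  by (metis add.commute less_diff_conv less_imp_add_positive trans_less_add2 add_less_cancel_left)

lemma prepend_in_omega_paths_iff:
  assumes "\<alpha> \<in> finite_paths n m"
  shows "prepend \<alpha> \<tau> \<in> omega_paths n l \<longleftrightarrow> \<tau> \<in> omega_paths n l"
proof -
  have states: "snd x \<in> {1..n}" if "x \<in> set \<alpha>" for x using assms that by (simp add: finite_paths_def)
  have "(\<forall>t. snd (prepend \<alpha> \<tau> t) \<in> {1..n}) \<longleftrightarrow> (\<forall>t. snd (\<tau> t) \<in> {1..n})"
    using states by (auto simp: prepend_def dest: spec[of _ "_ + length \<alpha>"])
  moreover have "infinite {t. snd (prepend \<alpha> \<tau> t) \<le> l} \<longleftrightarrow> infinite {t. snd (\<tau> t) \<le> l}"
    using infinite_shift_iff[of "\<lambda>t. snd (prepend \<alpha> \<tau> t) \<le> l" "length \<alpha>"]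
    by (simp add: prepend_def)
  ultimately show ?thesis by (simp add: omega_paths_def)
qed

lemma omega_paths_snd_cong:
  "(\<And>t. snd (\<sigma> t) = snd (\<sigma>' t)) \<Longrightarrow> \<sigma> \<in> omega_paths n l \<longleftrightarrow> \<sigma>' \<in> omega_paths n l"
  by (simp add: omega_paths_def)

lemma inj_prepend: "inj (prepend \<alpha>)"
  by (metis injI prepend_shift)

lemma omega_paths_with_prefix_eq_UN:
  assumes "P \<subseteq> finite_paths n m"
  shows "{\<sigma> \<in> omega_paths n l. map \<sigma> [0..<m] \<in> P} = (\<Union>\<alpha>\<in>P. prepend \<alpha> ` omega_paths n l)"
proof (intro set_eqI iffI)
  fix \<sigma> assume \<sigma>: "\<sigma> \<in> {\<sigma> \<in> omega_paths n l. map \<sigma> [0..<m] \<in> P}"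
  hence "(\<lambda>t. \<sigma> (t + m)) \<in> omega_paths n l"
    using assms prepend_in_omega_paths_iff[of "map \<sigma> [0..<m]" n m "\<lambda>t. \<sigma> (t + m)" l]
    by (auto simp: prepend_map_prefix)
  hence "\<sigma> \<in> prepend (map \<sigma> [0..<m]) ` omega_paths n l"
    by (metis image_eqI prepend_map_prefix)
  thus "\<sigma> \<in> (\<Union>\<alpha>\<in>P. prepend \<alpha> ` omega_paths n l)" using \<sigma> by blast
next
  fix \<sigma> assume "\<sigma> \<in> (\<Union>\<alpha>\<in>P. prepend \<alpha> ` omega_paths n l)"
  then obtain \<alpha> \<tau> where "\<alpha> \<in> P" "\<tau> \<in> omega_paths n l" "\<sigma> = prepend \<alpha> \<tau>" by blast
  moreover have "length \<alpha> = m" using assms \<open>\<alpha> \<in> P\<close> by (auto simp: finite_paths_def)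
  ultimately show "\<sigma> \<in> {\<sigma> \<in> omega_paths n l. map \<sigma> [0..<m] \<in> P}"
    using assms prepend_in_omega_paths_iff[of \<alpha> n m \<tau> l] prepend_prefix[of \<alpha> \<tau>] by auto
qed

lemma finite_paths_Suc_eq_UN:
  "{\<alpha> \<in> finite_paths n (Suc m). path_end \<pi> i \<alpha> = e}
    = (\<Union>x\<in>UNIV \<times> {1..n}. (#) x ` {\<beta> \<in> finite_paths n m. path_end (fst x) (snd x) \<beta> = e})"
  (is "?A = (\<Union>x\<in>_. (#) x ` ?S x)")
proof (intro set_eqI)
  fix \<alpha>
  show "\<alpha> \<in> ?A \<longleftrightarrow> \<alpha> \<in> (\<Union>x\<in>UNIV \<times> {1..n}. (#) x ` ?S x)"
  proof (cases \<alpha>)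
    case (Cons x \<beta>)
    have "x # \<beta> \<in> (\<Union>y\<in>UNIV \<times> {1..n}. (#) y ` ?S y) \<longleftrightarrow> x \<in> UNIV \<times> {1..n} \<and> \<beta> \<in> ?S x"
      by blast
    thus ?thesis unfolding Cons by (cases x) (auto simp: finite_paths_def path_end_Cons)
  qed (auto simp: finite_paths_def)
qed

definition first_visits :: "nat \<Rightarrow> 'g list \<Rightarrow> nat \<Rightarrow> nat \<Rightarrow> 'g config list set" where
  "first_visits n w m k = {\<alpha> \<in> finite_paths n (Suc m). \<alpha> ! m = (w, k) \<and> (\<forall>t<m. fst (\<alpha> ! t) \<noteq> w)}"

lemma first_visit_omega_paths_eq:
  "{\<sigma> \<in> omega_paths n l. fst (\<sigma> m) = w \<and> (\<forall>t<m. fst (\<sigma> t) \<noteq> w)}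
    = {\<sigma> \<in> omega_paths n l. map \<sigma> [0..<Suc m] \<in> (\<Union>k\<in>{1..n}. first_visits n w m k)}"
  by (auto simp: omega_paths_def first_visits_def finite_paths_def nth_append prod_eq_iff simp del: upt_Suc)

lemma omega_paths_first_visit_partition:
  "omega_paths n l = {\<sigma> \<in> omega_paths n l. \<forall>t. fst (\<sigma> t) \<noteq> w}
     \<union> (\<Union>m. {\<sigma> \<in> omega_paths n l. fst (\<sigma> m) = w \<and> (\<forall>t<m. fst (\<sigma> t) \<noteq> w)})"
  using exists_least_iff[of "\<lambda>t. fst (_ t) = w"] by blast

section \<open>Paths above a stack suffix\<close>

definition lift_config :: "'g list \<Rightarrow> 'g config \<Rightarrow> 'g config" where
  "lift_config w x = (fst x @ w, snd x)"

definition nonempty_configs :: "'g config set" where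
  "nonempty_configs = {x. fst x \<noteq> []}"

lemma inj_lift_config: "inj (lift_config w)"
  by (auto simp: inj_on_def lift_config_def prod_eq_iff)

lemma snd_lift_config [simp]: "snd (lift_config w x) = snd x"
  by (simp add: lift_config_def)

lemma in_range_lift_config_iff: "x \<in> range (lift_config w) \<longleftrightarrow> (\<exists>v. fst x = v @ w)"
  by (auto simp: lift_config_def image_iff prod_eq_iff)

lemma in_lift_config_nonempty_iff: "x \<in> lift_config w ` nonempty_configs \<longleftrightarrow> x \<in> range (lift_config w) \<and> fst x \<noteq> w"
  by (auto simp: lift_config_def nonempty_configs_def image_iff prod_eq_iff)

lemma inj_comp_lift_config: "inj ((\<circ>) (lift_config w))"
  by (rule injI, rule ext) (metis comp_apply injD[OF inj_lift_config])

lemma lift_config_image_omega_paths: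
  "(\<circ>) (lift_config w) ` {\<tau> \<in> omega_paths n l. \<forall>t. \<tau> t \<in> nonempty_configs}
    = {\<sigma> \<in> omega_paths n l. \<forall>t. \<sigma> t \<in> lift_config w ` nonempty_configs}"
proof (intro equalityI subsetI)
  fix \<sigma> assume "\<sigma> \<in> (\<circ>) (lift_config w) ` {\<tau> \<in> omega_paths n l. \<forall>t. \<tau> t \<in> nonempty_configs}"
  thus "\<sigma> \<in> {\<sigma> \<in> omega_paths n l. \<forall>t. \<sigma> t \<in> lift_config w ` nonempty_configs}"
    using omega_paths_snd_cong[of "lift_config w \<circ> _"] by auto
next
  fix \<sigma> assume \<sigma>: "\<sigma> \<in> {\<sigma> \<in> omega_paths n l. \<forall>t. \<sigma> t \<in> lift_config w ` nonempty_configs}"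
  define \<tau> where "\<tau> = inv (lift_config w) \<circ> \<sigma>"
  have "\<sigma> t \<in> range (lift_config w)" for t using \<sigma> by blast
  hence "lift_config w \<circ> \<tau> = \<sigma>" by (simp add: \<tau>_def fun_eq_iff f_inv_into_f)
  moreover have "\<tau> t \<in> nonempty_configs" for t
  proof -
    obtain x where "x \<in> nonempty_configs" "\<sigma> t = lift_config w x" using \<sigma> by blast
    thus ?thesis by (simp add: \<tau>_def inv_f_f[OF inj_lift_config])
  qed
  moreover have "\<tau> \<in> omega_paths n l"
    using \<sigma> omega_paths_snd_cong[of \<tau> \<sigma>] \<open>lift_config w \<circ> \<tau> = \<sigma>\<close> by auto
  ultimately show "\<sigma> \<in> (\<circ>) (lift_config w) ` {\<tau> \<in> omega_paths n l. \<forall>t. \<tau> t \<in> nonempty_configs}"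
    by blast
qed

lemma lift_config_image_finite_paths:
  "map (lift_config w) ` {\<beta> \<in> finite_paths n (Suc m). \<beta> ! m = ([], k) \<and> (\<forall>t<m. \<beta> ! t \<in> nonempty_configs)}
    = {\<alpha> \<in> finite_paths n (Suc m). \<alpha> ! m = (w, k) \<and> (\<forall>t<m. \<alpha> ! t \<in> lift_config w ` nonempty_configs)}"
proof (intro equalityI subsetI)
  fix \<alpha> assume "\<alpha> \<in> map (lift_config w) ` {\<beta> \<in> finite_paths n (Suc m). \<beta> ! m = ([], k) \<and> (\<forall>t<m. \<beta> ! t \<in> nonempty_configs)}"
  thus "\<alpha> \<in> {\<alpha> \<in> finite_paths n (Suc m). \<alpha> ! m = (w, k) \<and> (\<forall>t<m. \<alpha> ! t \<in> lift_config w ` nonempty_configs)}"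
    by (auto simp: finite_paths_def lift_config_def)
next
  fix \<alpha> assume \<alpha>: "\<alpha> \<in> {\<alpha> \<in> finite_paths n (Suc m). \<alpha> ! m = (w, k) \<and> (\<forall>t<m. \<alpha> ! t \<in> lift_config w ` nonempty_configs)}"
  have "\<alpha> ! t \<in> range (lift_config w)" if "t < Suc m" for t
  proof (cases "t < m")
    case True thus ?thesis using \<alpha> by blast
  next
    case False
    hence "t = m" using that by simp
    hence "\<alpha> ! t = lift_config w ([], k)" using \<alpha> by (simp add: lift_config_def)
    thus ?thesis by simp
  qed
  moreover have "length \<alpha> = Suc m" using \<alpha> by (simp add: finite_paths_def)
  ultimately have "\<alpha> \<in> lists (range (lift_config w))"
    by (metis in_listsI in_set_conv_nth)
  then obtain \<beta> where \<beta>: "\<alpha> = map (lift_config w) \<beta>" by (auto simp: lists_image)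
  have "\<beta> ! t \<in> nonempty_configs" if "t < m" for t
    using \<alpha> \<beta> that by (auto simp: finite_paths_def inj_image_mem_iff[OF inj_lift_config])
  moreover have "\<beta> ! m = ([], k)"
    using \<alpha> \<beta> by (auto simp: finite_paths_def lift_config_def prod_eq_iff)
  ultimately show "\<alpha> \<in> map (lift_config w) ` {\<beta> \<in> finite_paths n (Suc m). \<beta> ! m = ([], k) \<and> (\<forall>t<m. \<beta> ! t \<in> nonempty_configs)}"
    using \<alpha> \<beta> by (auto simp: finite_paths_def)
qed

lemma mprod_Nil: "mprod n [] i k = (if i = k then 1 else 0)"
  by (simp add: mprod_def mone_def)

lemma mprod_Cons: "mprod n (A # As) i k = (\<Sum>k0\<in>{1..n}. A i k0 * mprod n As k0 k)"
  by (simp add: mprod_def mmul_def)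

locale complete_semiring_semimodule_pair =
  fixes csS :: "(ix \<Rightarrow> 's::semiring_1) \<Rightarrow> ix set \<Rightarrow> 's"
    and csV :: "(ix \<Rightarrow> 'v::comm_monoid_add) \<Rightarrow> ix set \<Rightarrow> 'v"
    and smult :: "'s \<Rightarrow> 'v \<Rightarrow> 'v"
    and infprod :: "(nat \<Rightarrow> 's) \<Rightarrow> 'v"
  assumes complete_pair: "complete_ssp csS csV smult infprod"
begin

lemma complete_semiring_S: "complete_semiring csS"
  and complete_semimodule_V: "complete_semimodule csS csV smult"
  using complete_pair unfolding complete_ssp_def by blast+

lemma complete_monoid_S: "complete_monoid csS"
  and complete_monoid_V: "complete_monoid csV"
  using complete_semiring_S complete_semimodule_V
  unfolding complete_semiring_def complete_semimodule_def by blast+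

lemma
  shows smult_add_right: "smult s (v + w) = smult s v + smult s w"
    and smult_add_left: "smult (s + t) v = smult s v + smult t v"
    and smult_mult: "smult (s * t) v = smult s (smult t v)"
    and smult_one: "smult 1 v = v"
    and smult_zero_left: "smult 0 v = 0"
    and smult_zero_right: "smult s 0 = 0"
    and mult_esum_right: "a * esum csS e f A = esum csS e (\<lambda>x. a * f x) A"
    and smult_esum_right: "smult s (esum csV e g A) = esum csV e (\<lambda>x. smult s (g x)) A"
    and smult_esum_left: "smult (esum csS e f A) v = esum csV e (\<lambda>x. smult (f x) v) A"
  using complete_semiring_S complete_semimodule_V
  unfolding complete_semiring_def complete_semimodule_def esum_def
  by (elim conjE; simp; fail)+

lemma infprod_unfold: "infprod u = smult (u 0) (infprod (\<lambda>j. u (Suc j)))"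
proof -
  have "\<forall>u. infprod u = smult (u 0) (infprod (\<lambda>j. u (Suc j)))"
    using complete_pair unfolding complete_ssp_def by (elim conjE)
  thus ?thesis by blast
qed

lemma smult_sum_left: "smult (sum f A) v = (\<Sum>x\<in>A. smult (f x) v)"
  by (induction A rule: infinite_finite_induct) (simp_all add: smult_zero_left smult_add_left)

lemma smult_sum_right: "smult s (sum g A) = (\<Sum>x\<in>A. smult s (g x))"
  by (induction A rule: infinite_finite_induct) (simp_all add: smult_zero_right smult_add_right)

lemma sum_smult_mprod_Nil:
  assumes "i \<in> {1..n}" shows "(\<Sum>k\<in>{1..n}. smult (mprod n [] i k) (v k)) = v i"
proof -
  have "(\<Sum>k\<in>{1..n}. smult (mprod n [] i k) (v k)) = (\<Sum>k\<in>{1..n}. if i = k then v k else 0)"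
    by (rule sum.cong) (simp_all add: mprod_Nil smult_one smult_zero_left)
  thus ?thesis using assms by simp
qed

lemma sum_smult_mprod_Cons:
  "(\<Sum>k\<in>{1..n}. smult (mprod n (A # As) i k) (v k))
    = (\<Sum>k0\<in>{1..n}. smult (A i k0) (\<Sum>k\<in>{1..n}. smult (mprod n As k0 k) (v k)))"
  by (simp add: mprod_Cons smult_sum_left smult_sum_right smult_mult) (rule sum.swap)

lemma infprod_split: "infprod u = smult (prod_list (map u [0..<m])) (infprod (\<lambda>t. u (t + m)))"
proof (induction m)
  case (Suc m)
  have "infprod (\<lambda>t. u (t + m)) = smult (u m) (infprod (\<lambda>t. u (t + Suc m)))"
    using infprod_unfold[of "\<lambda>t. u (t + m)"] by simp
  thus ?case using Suc by (simp add: smult_mult)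
qed (simp add: smult_one)

lemma infprod_eq_zero: "u t = 0 \<Longrightarrow> infprod u = 0"
  using infprod_split[of u "Suc t"] by (simp add: smult_zero_left)

lemma infprod_path_weight_prepend:
  "infprod (path_weight M \<pi> i (prepend \<alpha> \<tau>)) =
   smult (finite_weight M \<pi> i \<alpha>) (infprod (path_weight M (fst (path_end \<pi> i \<alpha>)) (snd (path_end \<pi> i \<alpha>)) \<tau>))"
proof (cases "\<alpha> = []")
  case True thus ?thesis by (simp add: prepend_def path_end_def smult_one)
next
  case False
  then obtain m where m: "length \<alpha> = Suc m" by (cases \<alpha>) auto
  have "infprod (path_weight M \<pi> i (prepend \<alpha> \<tau>)) =
      smult (prod_list (map (path_weight M \<pi> i (prepend \<alpha> \<tau>)) [0..<Suc m]))
            (infprod (\<lambda>t. path_weight M \<pi> i (prepend \<alpha> \<tau>) (t + Suc m)))"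
    by (rule infprod_split)
  also have "prod_list (map (path_weight M \<pi> i (prepend \<alpha> \<tau>)) [0..<Suc m]) = finite_weight M \<pi> i \<alpha>"
    using finite_weight_map_prefix[of M \<pi> i "prepend \<alpha> \<tau>" "Suc m"] prepend_prefix[of \<alpha> \<tau>] m by simp
  also have "(\<lambda>t. path_weight M \<pi> i (prepend \<alpha> \<tau>) (t + Suc m)) =
      path_weight M (fst (prepend \<alpha> \<tau> m)) (snd (prepend \<alpha> \<tau> m)) (\<lambda>t. prepend \<alpha> \<tau> (t + Suc m))"
    by (rule ext, rule path_weight_shift)
  also have "(\<lambda>t. prepend \<alpha> \<tau> (t + Suc m)) = \<tau>" using prepend_shift[of \<alpha> \<tau>] m by simp
  also have "prepend \<alpha> \<tau> m = path_end \<pi> i \<alpha>" using m False by (simp add: prepend_def path_end_def last_conv_nth)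
  finally show ?thesis .
qed

end

locale transition_system = complete_semiring_semimodule_pair csS csV smult infprod
  for csS :: "(ix \<Rightarrow> 's::semiring_1) \<Rightarrow> ix set \<Rightarrow> 's"
    and csV :: "(ix \<Rightarrow> 'v::comm_monoid_add) \<Rightarrow> ix set \<Rightarrow> 'v"
    and smult infprod +
  fixes n :: nat and M :: "'g::finite list \<Rightarrow> 'g list \<Rightarrow> nat \<Rightarrow> nat \<Rightarrow> 's"
begin

abbreviation Momega :: "nat \<Rightarrow> 'g list \<Rightarrow> nat \<Rightarrow> 'v" where
  "Momega l \<pi> i \<equiv> momega csV infprod n M l \<pi> i"

abbreviation path_sum :: "'g list \<Rightarrow> nat \<Rightarrow> (nat \<Rightarrow> 'g config) set \<Rightarrow> 'v" where
  "path_sum \<pi> i A \<equiv> esum csV senc (\<lambda>\<sigma>. infprod (path_weight M \<pi> i \<sigma>)) A"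

abbreviation Momega_end :: "nat \<Rightarrow> 'g list \<Rightarrow> nat \<Rightarrow> 'g config list \<Rightarrow> 'v" where
  "Momega_end l \<pi> i \<alpha> \<equiv> Momega l (fst (path_end \<pi> i \<alpha>)) (snd (path_end \<pi> i \<alpha>))"

lemma Momega_eq_path_sum: "Momega l \<pi> i = path_sum \<pi> i (omega_paths n l)"
  unfolding momega_def omega_paths_def by (rule Ssum_eq_esum[OF complete_monoid_V])

lemma path_sum_prefix_decomposition:
  assumes P: "P \<subseteq> finite_paths n m"
  shows "path_sum \<pi> i {\<sigma> \<in> omega_paths n l. map \<sigma> [0..<m] \<in> P}
    = esum csV cenc (\<lambda>\<alpha>. smult (finite_weight M \<pi> i \<alpha>) (Momega_end l \<pi> i \<alpha>)) P"
proof -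
  have disj: "prepend \<alpha> ` X \<inter> prepend \<beta> ` Y = {}" if "\<alpha> \<in> P" "\<beta> \<in> P" "\<alpha> \<noteq> \<beta>" for \<alpha> \<beta> X Y
  proof -
    have "length \<alpha> = m" "length \<beta> = m" using that P by (auto simp: finite_paths_def)
    hence "prepend \<alpha> x \<noteq> prepend \<beta> y" for x y
      using \<open>\<alpha> \<noteq> \<beta>\<close> prepend_prefix[of \<alpha> x] prepend_prefix[of \<beta> y] by metis
    thus ?thesis by blast
  qed
  have "path_sum \<pi> i (\<Union>\<alpha>\<in>P. prepend \<alpha> ` omega_paths n l)
     = esum csV cenc (\<lambda>\<alpha>. path_sum \<pi> i (prepend \<alpha> ` omega_paths n l)) P"
    by (rule esum_UN_disjoint[OF complete_monoid_V inj_on_senc inj_on_cenc disj])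
  also have "\<dots> = esum csV cenc (\<lambda>\<alpha>. smult (finite_weight M \<pi> i \<alpha>) (Momega_end l \<pi> i \<alpha>)) P"
  proof (rule esum_cong[OF complete_monoid_V])
    fix \<alpha>
    have "path_sum \<pi> i (prepend \<alpha> ` omega_paths n l)
        = esum csV senc (\<lambda>\<tau>. infprod (path_weight M \<pi> i (prepend \<alpha> \<tau>))) (omega_paths n l)"
      by (rule esum_reindex[OF complete_monoid_V inj_on_senc inj_on_senc inj_on_subset[OF inj_prepend]]) simp
    also have "\<dots> = smult (finite_weight M \<pi> i \<alpha>) (Momega_end l \<pi> i \<alpha>)"
      by (simp only: infprod_path_weight_prepend smult_esum_right Momega_eq_path_sum)
    finally show "path_sum \<pi> i (prepend \<alpha> ` omega_paths n l)
        = smult (finite_weight M \<pi> i \<alpha>) (Momega_end l \<pi> i \<alpha>)" .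
  qed
  finally show ?thesis by (simp only: omega_paths_with_prefix_eq_UN[OF P])
qed

lemma Momega_unfold:
  "Momega l \<pi> i = esum csV cenc (\<lambda>x. smult (M \<pi> (fst x) i (snd x)) (Momega l (fst x) (snd x))) (UNIV \<times> {1..n})"
proof -
  have all: "{\<sigma> \<in> omega_paths n l. map \<sigma> [0..<1] \<in> finite_paths n 1} = omega_paths n l"
    by (auto simp: omega_paths_def finite_paths_def)
  have "Momega l \<pi> i = esum csV cenc (\<lambda>\<alpha>. smult (finite_weight M \<pi> i \<alpha>) (Momega_end l \<pi> i \<alpha>))
      (finite_paths n 1)"
    using path_sum_prefix_decomposition[of "finite_paths n 1" 1 \<pi> i l, unfolded all]
    by (simp only: Momega_eq_path_sum[of l \<pi>] order_refl simp_thms)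
  also have "finite_paths n 1 = (\<lambda>x. [x]) ` (UNIV \<times> {1..n})"
    by (auto simp: finite_paths_def length_Suc_conv)
  also have "esum csV cenc (\<lambda>\<alpha>. smult (finite_weight M \<pi> i \<alpha>) (Momega_end l \<pi> i \<alpha>)) \<dots>
      = esum csV cenc (\<lambda>x. smult (M \<pi> (fst x) i (snd x)) (Momega l (fst x) (snd x))) (UNIV \<times> {1..n})"
    by (subst esum_reindex[OF complete_monoid_V inj_on_cenc inj_on_cenc])
      (simp_all add: finite_weight_Cons path_end_def inj_on_def)
  finally show ?thesis .
qed

lemma mpow_eq_esum_finite_paths:
  "mpow csS n M m \<pi> \<pi>' i j
    = esum csS cenc (finite_weight M \<pi> i) {\<alpha> \<in> finite_paths n m. path_end \<pi> i \<alpha> = (\<pi>', j)}"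
proof (induction m arbitrary: \<pi> i)
  case 0
  have "{\<alpha> \<in> finite_paths n 0. path_end \<pi> i \<alpha> = (\<pi>', j)} = (if \<pi> = \<pi>' \<and> i = j then {[]} else {})"
    by (auto simp: finite_paths_def path_end_def)
  thus ?case
    by (simp add: esum_singleton[OF complete_monoid_S] esum_empty[OF complete_monoid_S])
next
  case (Suc m)
  define S where "S x = {\<beta> \<in> finite_paths n m. path_end (fst x) (snd x) \<beta> = (\<pi>', j)}" for x :: "'g config"
  have "mpow csS n M (Suc m) \<pi> \<pi>' i j
      = esum csS cenc (\<lambda>x. M \<pi> (fst x) i (snd x) * mpow csS n M m (fst x) \<pi>' (snd x) j) (UNIV \<times> {1..n})"
    by (simp add: Csum_eq_esum[OF complete_monoid_S] case_prod_beta')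
  also have "\<dots> = esum csS cenc (\<lambda>x. esum csS cenc (finite_weight M \<pi> i) ((#) x ` S x)) (UNIV \<times> {1..n})"
  proof (rule esum_cong[OF complete_monoid_S])
    fix x :: "'g config"
    have "M \<pi> (fst x) i (snd x) * mpow csS n M m (fst x) \<pi>' (snd x) j
        = esum csS cenc (\<lambda>\<beta>. finite_weight M \<pi> i (x # \<beta>)) (S x)"
      by (simp add: Suc.IH S_def mult_esum_right finite_weight_Cons)
    also have "\<dots> = esum csS cenc (finite_weight M \<pi> i) ((#) x ` S x)"
      by (rule esum_reindex[OF complete_monoid_S inj_on_cenc inj_on_cenc, symmetric]) simp
    finally show "M \<pi> (fst x) i (snd x) * mpow csS n M m (fst x) \<pi>' (snd x) j
        = esum csS cenc (finite_weight M \<pi> i) ((#) x ` S x)" .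
  qed
  also have "\<dots> = esum csS cenc (finite_weight M \<pi> i) (\<Union>x\<in>UNIV \<times> {1..n}. (#) x ` S x)"
    by (rule esum_UN_disjoint[OF complete_monoid_S inj_on_cenc inj_on_cenc, symmetric]) auto
  finally show ?case by (simp only: S_def finite_paths_Suc_eq_UN)
qed

lemma mstar_eq_esum_mpow_Suc:
  assumes "\<pi> \<noteq> \<pi>'"
  shows "mstar csS n M \<pi> \<pi>' i k = esum csS cenc (\<lambda>m. mpow csS n M (Suc m) \<pi> \<pi>' i k) UNIV"
proof -
  have "mstar csS n M \<pi> \<pi>' i k = esum csS cenc (\<lambda>m. mpow csS n M m \<pi> \<pi>' i k) UNIV"
    unfolding mstar_def by (rule Csum_eq_esum[OF complete_monoid_S])
  also have "\<dots> = esum csS cenc (\<lambda>m. mpow csS n M m \<pi> \<pi>' i k) (range Suc)"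
  proof (rule esum_mono_neutral_right[OF complete_monoid_S inj_on_cenc])
    fix m assume "m \<in> UNIV - range Suc"
    hence "m = 0" by (cases m) auto
    thus "mpow csS n M m \<pi> \<pi>' i k = 0" using assms by simp
  qed simp
  also have "\<dots> = esum csS cenc (\<lambda>m. mpow csS n M (Suc m) \<pi> \<pi>' i k) UNIV"
    by (rule esum_reindex[OF complete_monoid_S inj_on_cenc inj_on_cenc]) simp
  finally show ?thesis .
qed

end

section \<open>Pushdown transition matrices\<close>

locale pushdown_system = transition_system csS csV smult infprod n M
  for csS :: "(ix \<Rightarrow> 's::semiring_1) \<Rightarrow> ix set \<Rightarrow> 's"
    and csV :: "(ix \<Rightarrow> 'v::comm_monoid_add) \<Rightarrow> ix set \<Rightarrow> 'v"
    and smult infprod n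
    and M :: "'g::finite list \<Rightarrow> 'g list \<Rightarrow> nat \<Rightarrow> nat \<Rightarrow> 's" +
  assumes pushdown: "pushdown_tm n M"
begin

lemma M_Nil: "i \<in> {1..n} \<Longrightarrow> j \<in> {1..n} \<Longrightarrow> M [] x i j = 0"
  using pushdown unfolding pushdown_tm_def by blast

lemma M_append:
  assumes "u \<noteq> []" "i \<in> {1..n}" "j \<in> {1..n}"
  shows "M (u @ w) (u' @ w) i j = M u u' i j"
proof -
  obtain q u0 where u: "u = q # u0" using assms(1) by (cases u) auto
  have shift: "M (q # \<pi>') (\<pi> @ \<pi>') i j = M [q] \<pi> i j" for \<pi> \<pi>'
    using pushdown assms(2,3) unfolding pushdown_tm_def by blast
  have zero: "M \<pi>1 \<pi>2 i j = 0" if "\<nexists>p \<pi> \<pi>'. \<pi>1 = p # \<pi>' \<and> \<pi>2 = \<pi> @ \<pi>'" for \<pi>1 \<pi>2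
    using pushdown assms(2,3) that unfolding pushdown_tm_def by blast
  show ?thesis
  proof (cases "\<exists>\<pi>. u' = \<pi> @ u0")
    case True
    then obtain \<pi> where "u' = \<pi> @ u0" by blast
    hence "M (u @ w) (u' @ w) i j = M (q # u0 @ w) (\<pi> @ u0 @ w) i j" by (simp add: u)
    also have "\<dots> = M (q # u0) (\<pi> @ u0) i j" by (simp only: shift)
    finally show ?thesis by (simp add: u \<open>u' = \<pi> @ u0\<close>)
  next
    case False
    thus ?thesis using zero[of u u'] zero[of "u @ w" "u' @ w"] by (auto simp: u)
  qed
qed

lemma M_not_append:
  assumes "u \<noteq> []" "i \<in> {1..n}" "j \<in> {1..n}" and "\<nexists>v. x = v @ w"
  shows "M (u @ w) x i j = 0"
proof -
  obtain q u0 where u: "u = q # u0" using assms(1) by (cases u) auto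
  have "\<nexists>p \<pi> \<pi>'. u @ w = p # \<pi>' \<and> x = \<pi> @ \<pi>'"
    using assms(4) by (auto simp: u)
  thus ?thesis using pushdown assms(2,3) unfolding pushdown_tm_def by blast
qed

lemma Momega_Nil: "i \<in> {1..n} \<Longrightarrow> Momega l [] i = 0"
  unfolding Momega_eq_path_sum
  by (rule esum_neutral[OF complete_monoid_V], rule infprod_eq_zero[of _ 0])
    (simp add: omega_paths_def path_weight_def M_Nil)

lemma path_weight_lift_config:
  assumes "i \<in> {1..n}" and "\<And>s. s \<le> t \<Longrightarrow> snd (\<tau> s) \<in> {1..n}"
    and "\<And>s. s < t \<Longrightarrow> \<tau> s \<in> nonempty_configs"
  shows "path_weight M (q # w) i (lift_config w \<circ> \<tau>) t = path_weight M [q] i \<tau> t"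
  using assms M_append[of "[q]" i "snd (\<tau> 0)" w] M_append[of "fst (\<tau> (t - 1))"]
  by (cases t) (auto simp: path_weight_def lift_config_def nonempty_configs_def)

lemma path_weight_after_Nil:
  "fst (\<tau> t) = [] \<Longrightarrow> snd (\<tau> t) \<in> {1..n} \<Longrightarrow> snd (\<tau> (Suc t)) \<in> {1..n}
    \<Longrightarrow> path_weight M \<pi> i \<tau> (Suc t) = 0"
  by (simp add: path_weight_def M_Nil)

lemma path_weight_leaving_suffix:
  assumes "i \<in> {1..n}" and "\<And>s. s \<le> t \<Longrightarrow> snd (\<sigma> s) \<in> {1..n}"
    and "\<sigma> t \<notin> range (lift_config w)" and "\<And>s. s < t \<Longrightarrow> \<sigma> s \<in> lift_config w ` nonempty_configs"
  shows "path_weight M (q # w) i \<sigma> t = 0"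
proof (cases t)
  case 0
  thus ?thesis using assms M_not_append[of "[q]" i "snd (\<sigma> 0)" "fst (\<sigma> 0)" w]
    by (simp add: path_weight_def in_range_lift_config_iff)
next
  case (Suc t')
  obtain v where "v \<noteq> []" "fst (\<sigma> t') = v @ w"
    using assms(4)[of t'] Suc by (auto simp: lift_config_def nonempty_configs_def)
  thus ?thesis using assms Suc M_not_append[of v "snd (\<sigma> t')" "snd (\<sigma> t)" "fst (\<sigma> t)" w]
    by (simp add: path_weight_def in_range_lift_config_iff)
qed

text \<open>The first step out of the configurations above w goes from a stack v w with v nonempty
  to a stack not ending in w, and the pushdown matrix vanishes on such steps.\<close>
lemma path_weight_zero_if_escapes:
  assumes "i \<in> {1..n}" and "\<sigma> t \<notin> lift_config w ` nonempty_configs"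
    and "\<And>s. s \<le> t \<Longrightarrow> snd (\<sigma> s) \<in> {1..n} \<and> fst (\<sigma> s) \<noteq> w"
  shows "\<exists>s\<le>t. path_weight M (q # w) i \<sigma> s = 0"
proof -
  obtain s where s: "\<sigma> s \<notin> lift_config w ` nonempty_configs"
    and least: "\<And>s'. s' < s \<Longrightarrow> \<sigma> s' \<in> lift_config w ` nonempty_configs"
    using assms(2) exists_least_iff[of "\<lambda>s. \<sigma> s \<notin> lift_config w ` nonempty_configs"] by blast
  have "s \<le> t" using least assms(2) not_less by blast
  hence "\<sigma> s \<notin> range (lift_config w)" using s assms(3) by (simp add: in_lift_config_nonempty_iff)
  thus ?thesis using \<open>s \<le> t\<close> assms(1,3) least
    by (intro exI[of _ s]) (simp add: path_weight_leaving_suffix)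
qed

lemma Momega_eq_path_sum_nonempty:
  "Momega l \<pi> i = path_sum \<pi> i {\<tau> \<in> omega_paths n l. \<forall>t. \<tau> t \<in> nonempty_configs}"
  unfolding Momega_eq_path_sum
proof (rule esum_mono_neutral_right[OF complete_monoid_V inj_on_senc])
  fix \<tau> :: "nat \<Rightarrow> 'g config"
  assume "\<tau> \<in> omega_paths n l - {\<tau> \<in> omega_paths n l. \<forall>t. \<tau> t \<in> nonempty_configs}"
  then obtain t where "fst (\<tau> t) = []" "\<forall>t. snd (\<tau> t) \<in> {1..n}"
    by (auto simp: omega_paths_def nonempty_configs_def)
  thus "infprod (path_weight M \<pi> i \<tau>) = 0"
    by (intro infprod_eq_zero[of _ "Suc t"] path_weight_after_Nil) auto
qed auto

lemma path_sum_avoiding_eq_Momega: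
  assumes i: "i \<in> {1..n}"
  shows "path_sum (q # w) i {\<sigma> \<in> omega_paths n l. \<forall>t. fst (\<sigma> t) \<noteq> w} = Momega l [q] i"
proof -
  let ?above = "{\<sigma> \<in> omega_paths n l. \<forall>t. \<sigma> t \<in> lift_config w ` nonempty_configs}"
  let ?nonempty = "{\<tau> \<in> omega_paths n l. \<forall>t. \<tau> t \<in> nonempty_configs}"
  have "path_sum (q # w) i {\<sigma> \<in> omega_paths n l. \<forall>t. fst (\<sigma> t) \<noteq> w} = path_sum (q # w) i ?above"
  proof (rule esum_mono_neutral_right[OF complete_monoid_V inj_on_senc])
    fix \<sigma> assume \<sigma>: "\<sigma> \<in> {\<sigma> \<in> omega_paths n l. \<forall>t. fst (\<sigma> t) \<noteq> w} - ?above"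
    then obtain t where "\<sigma> t \<notin> lift_config w ` nonempty_configs" by auto
    then obtain s where "path_weight M (q # w) i \<sigma> s = 0"
      using path_weight_zero_if_escapes[OF i, of \<sigma> t w q] \<sigma> by (auto simp: omega_paths_def)
    thus "infprod (path_weight M (q # w) i \<sigma>) = 0" by (rule infprod_eq_zero)
  qed (auto simp: in_lift_config_nonempty_iff)
  also have "\<dots> = path_sum (q # w) i ((\<circ>) (lift_config w) ` ?nonempty)"
    by (simp only: lift_config_image_omega_paths)
  also have "\<dots> = esum csV senc (\<lambda>\<tau>. infprod (path_weight M (q # w) i (lift_config w \<circ> \<tau>))) ?nonempty"
    by (rule esum_reindex[OF complete_monoid_V inj_on_senc inj_on_senc
          inj_on_subset[OF inj_comp_lift_config]]) simp
  also have "\<dots> = path_sum [q] i ?nonempty"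
    by (rule esum_cong[OF complete_monoid_V], rule arg_cong[where f=infprod], rule ext,
        rule path_weight_lift_config[OF i]) (auto simp: omega_paths_def)
  finally show ?thesis by (simp only: Momega_eq_path_sum_nonempty)
qed

lemma finite_weight_lift_config:
  assumes i: "i \<in> {1..n}" and "\<beta> \<in> finite_paths n (Suc m)" and "\<forall>t<m. \<beta> ! t \<in> nonempty_configs"
  shows "finite_weight M (q # w) i (map (lift_config w) \<beta>) = finite_weight M [q] i \<beta>"
  unfolding finite_weight_def
proof (intro arg_cong[where f=prod_list] map_cong)
  fix t assume "t \<in> set [0..<length \<beta>]"
  hence t: "t < Suc m" using assms(2) by (simp add: finite_paths_def)
  have "path_weight M (q # w) i (nth (map (lift_config w) \<beta>)) t
      = path_weight M (q # w) i (lift_config w \<circ> nth \<beta>) t"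
    using t assms(2) by (intro path_weight_cong) (auto simp: finite_paths_def)
  also have "\<dots> = path_weight M [q] i (nth \<beta>) t"
    using t assms by (intro path_weight_lift_config[OF i]) (auto simp: finite_paths_def)
  finally show "path_weight M (q # w) i (nth (map (lift_config w) \<beta>)) t = path_weight M [q] i (nth \<beta>) t" .
qed simp

lemma mpow_Suc_to_Nil_eq_esum_nonempty:
  "mpow csS n M (Suc m) \<pi> [] i k
    = esum csS cenc (finite_weight M \<pi> i) {\<beta> \<in> finite_paths n (Suc m). \<beta> ! m = ([], k) \<and> (\<forall>t<m. \<beta> ! t \<in> nonempty_configs)}"
proof -
  have "mpow csS n M (Suc m) \<pi> [] i k
      = esum csS cenc (finite_weight M \<pi> i) {\<beta> \<in> finite_paths n (Suc m). \<beta> ! m = ([], k)}"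
    unfolding mpow_eq_esum_finite_paths
    by (rule arg_cong[where f="esum csS cenc _"]) (auto simp: finite_paths_def path_end_eq_nth)
  also have "\<dots> = esum csS cenc (finite_weight M \<pi> i) {\<beta> \<in> finite_paths n (Suc m). \<beta> ! m = ([], k) \<and> (\<forall>t<m. \<beta> ! t \<in> nonempty_configs)}"
  proof (rule esum_mono_neutral_right[OF complete_monoid_S inj_on_cenc])
    fix \<beta> :: "'g config list"
    assume \<beta>: "\<beta> \<in> {\<beta> \<in> finite_paths n (Suc m). \<beta> ! m = ([], k)}
      - {\<beta> \<in> finite_paths n (Suc m). \<beta> ! m = ([], k) \<and> (\<forall>t<m. \<beta> ! t \<in> nonempty_configs)}"
    then obtain t where t: "t < m" "fst (\<beta> ! t) = []" by (auto simp: nonempty_configs_def)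
    have "path_weight M \<pi> i (nth \<beta>) (Suc t) = 0"
      using \<beta> t by (intro path_weight_after_Nil) (auto simp: finite_paths_def)
    thus "finite_weight M \<pi> i \<beta> = 0" using \<beta> t by (intro finite_weight_eq_zero) (auto simp: finite_paths_def)
  qed auto
  finally show ?thesis .
qed

lemma esum_first_visits_eq_mpow:
  assumes i: "i \<in> {1..n}"
  shows "esum csS cenc (finite_weight M (q # w) i) (first_visits n w m k) = mpow csS n M (Suc m) [q] [] i k"
proof -
  let ?above = "{\<alpha> \<in> finite_paths n (Suc m). \<alpha> ! m = (w, k) \<and> (\<forall>t<m. \<alpha> ! t \<in> lift_config w ` nonempty_configs)}"
  let ?nonempty = "{\<beta> \<in> finite_paths n (Suc m). \<beta> ! m = ([], k) \<and> (\<forall>t<m. \<beta> ! t \<in> nonempty_configs)}"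
  have "esum csS cenc (finite_weight M (q # w) i) (first_visits n w m k)
      = esum csS cenc (finite_weight M (q # w) i) ?above"
  proof (rule esum_mono_neutral_right[OF complete_monoid_S inj_on_cenc])
    fix \<alpha> assume \<alpha>: "\<alpha> \<in> first_visits n w m k - ?above"
    then obtain t where t: "t < m" "\<alpha> ! t \<notin> lift_config w ` nonempty_configs" by (auto simp: first_visits_def)
    then obtain s where "s \<le> t" "path_weight M (q # w) i (nth \<alpha>) s = 0"
      using \<alpha> path_weight_zero_if_escapes[OF i, of "nth \<alpha>" t w q]
      by (auto simp: first_visits_def finite_paths_def)
    thus "finite_weight M (q # w) i \<alpha> = 0"
      using \<alpha> t by (intro finite_weight_eq_zero) (auto simp: first_visits_def finite_paths_def)
  qed (auto simp: first_visits_def in_lift_config_nonempty_iff)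
  also have "\<dots> = esum csS cenc (\<lambda>\<beta>. finite_weight M (q # w) i (map (lift_config w) \<beta>)) ?nonempty"
    unfolding lift_config_image_finite_paths[symmetric]
    by (rule esum_reindex[OF complete_monoid_S inj_on_cenc inj_on_cenc])
      (rule inj_on_subset[OF inj_mapI[OF inj_lift_config]], simp)
  also have "\<dots> = esum csS cenc (finite_weight M [q] i) ?nonempty"
    by (rule esum_cong[OF complete_monoid_S]) (auto intro: finite_weight_lift_config[OF i])
  finally show ?thesis by (simp only: mpow_Suc_to_Nil_eq_esum_nonempty)
qed

lemma path_sum_first_visit:
  assumes i: "i \<in> {1..n}"
  shows "path_sum (q # w) i {\<sigma> \<in> omega_paths n l. fst (\<sigma> m) = w \<and> (\<forall>t<m. fst (\<sigma> t) \<noteq> w)}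
    = (\<Sum>k\<in>{1..n}. smult (mpow csS n M (Suc m) [q] [] i k) (Momega l w k))"
proof -
  let ?f = "\<lambda>\<alpha>. smult (finite_weight M (q # w) i \<alpha>) (Momega_end l (q # w) i \<alpha>)"
  have "path_sum (q # w) i {\<sigma> \<in> omega_paths n l. fst (\<sigma> m) = w \<and> (\<forall>t<m. fst (\<sigma> t) \<noteq> w)}
      = esum csV cenc ?f (\<Union>k\<in>{1..n}. first_visits n w m k)"
    unfolding first_visit_omega_paths_eq
    by (rule path_sum_prefix_decomposition) (auto simp: first_visits_def)
  also have "\<dots> = esum csV cenc (\<lambda>k. esum csV cenc ?f (first_visits n w m k)) {1..n}"
    by (rule esum_UN_disjoint[OF complete_monoid_V inj_on_cenc inj_on_cenc]) (auto simp: first_visits_def)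
  also have "\<dots> = (\<Sum>k\<in>{1..n}. esum csV cenc ?f (first_visits n w m k))"
    by (rule esum_eq_sum[OF complete_monoid_V finite_atLeastAtMost inj_on_cenc])
  also have "\<dots> = (\<Sum>k\<in>{1..n}. smult (esum csS cenc (finite_weight M (q # w) i) (first_visits n w m k)) (Momega l w k))"
  proof (rule sum.cong[OF refl])
    fix k
    have "esum csV cenc ?f (first_visits n w m k)
        = esum csV cenc (\<lambda>\<alpha>. smult (finite_weight M (q # w) i \<alpha>) (Momega l w k)) (first_visits n w m k)"
      by (rule esum_cong[OF complete_monoid_V])
        (simp add: first_visits_def finite_paths_def path_end_eq_nth)
    thus "esum csV cenc ?f (first_visits n w m k)
        = smult (esum csS cenc (finite_weight M (q # w) i) (first_visits n w m k)) (Momega l w k)"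
      by (simp only: smult_esum_left)
  qed
  finally show ?thesis by (simp only: esum_first_visits_eq_mpow[OF i])
qed

lemma Momega_Cons:
  assumes i: "i \<in> {1..n}"
  shows "Momega l (q # w) i = Momega l [q] i + (\<Sum>k\<in>{1..n}. smult (mstar csS n M [q] [] i k) (Momega l w k))"
proof -
  let ?avoid = "{\<sigma> \<in> omega_paths n l. \<forall>t. fst (\<sigma> t) \<noteq> w}"
  let ?visit = "\<lambda>m. {\<sigma> \<in> omega_paths n l. fst (\<sigma> m) = w \<and> (\<forall>t<m. fst (\<sigma> t) \<noteq> w)}"
  have disj: "?visit m \<inter> ?visit m' = {}" if "m \<noteq> m'" for m m'
    using that by (auto dest: nat_neq_iff[THEN iffD1])
  have "Momega l (q # w) i = path_sum (q # w) i ?avoid + path_sum (q # w) i (\<Union>m. ?visit m)"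
    unfolding Momega_eq_path_sum
    by (subst omega_paths_first_visit_partition[of n l w])
      (rule esum_union_disjoint[OF complete_monoid_V inj_on_senc], auto)
  also have "path_sum (q # w) i (\<Union>m. ?visit m) = esum csV cenc (\<lambda>m. path_sum (q # w) i (?visit m)) UNIV"
    by (rule esum_UN_disjoint[OF complete_monoid_V inj_on_senc inj_on_cenc disj])
  also have "\<dots> = esum csV cenc (\<lambda>m. \<Sum>k\<in>{1..n}. smult (mpow csS n M (Suc m) [q] [] i k) (Momega l w k)) UNIV"
    by (rule esum_cong[OF complete_monoid_V], rule path_sum_first_visit[OF i])
  also have "\<dots> = (\<Sum>k\<in>{1..n}. smult (mstar csS n M [q] [] i k) (Momega l w k))"
    by (simp add: esum_sum_commute[OF complete_monoid_V] smult_esum_left mstar_eq_esum_mpow_Suc)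
  finally show ?thesis by (simp only: path_sum_avoiding_eq_Momega[OF i])
qed

abbreviation Mstar_pop :: "'g \<Rightarrow> nat \<Rightarrow> nat \<Rightarrow> 's" where
  "Mstar_pop q \<equiv> mstar csS n M [q] []"

lemma Momega_stack:
  assumes "i \<in> {1..n}"
  shows "Momega l \<pi> i = (\<Sum>t<length \<pi>. \<Sum>k\<in>{1..n}.
            smult (mprod n (map Mstar_pop (take t \<pi>)) i k) (Momega l [\<pi> ! t] k))"
  using assms
proof (induction \<pi> arbitrary: i)
  case Nil thus ?case by (simp add: Momega_Nil)
next
  case (Cons q w)
  define X where "X t k0 = (\<Sum>k\<in>{1..n}. smult (mprod n (map Mstar_pop (take t w)) k0 k) (Momega l [w ! t] k))"
    for t k0
  have "(\<Sum>t<length (q # w). \<Sum>k\<in>{1..n}.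
          smult (mprod n (map Mstar_pop (take t (q # w))) i k) (Momega l [(q # w) ! t] k))
      = (\<Sum>k\<in>{1..n}. smult (mprod n [] i k) (Momega l [q] k))
        + (\<Sum>t<length w. \<Sum>k\<in>{1..n}.
          smult (mprod n (Mstar_pop q # map Mstar_pop (take t w)) i k) (Momega l [w ! t] k))"
    by (simp only: length_Cons sum.lessThan_Suc_shift take_0 take_Suc_Cons list.map nth_Cons_0 nth_Cons_Suc)
  also have "(\<Sum>k\<in>{1..n}. smult (mprod n [] i k) (Momega l [q] k)) = Momega l [q] i"
    by (rule sum_smult_mprod_Nil[OF Cons.prems])
  also have "(\<Sum>t<length w. \<Sum>k\<in>{1..n}.
          smult (mprod n (Mstar_pop q # map Mstar_pop (take t w)) i k) (Momega l [w ! t] k))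
      = (\<Sum>t<length w. \<Sum>k0\<in>{1..n}. smult (Mstar_pop q i k0) (X t k0))"
    by (simp only: sum_smult_mprod_Cons X_def)
  also have "\<dots> = (\<Sum>k0\<in>{1..n}. smult (Mstar_pop q i k0) (\<Sum>t<length w. X t k0))"
    by (subst sum.swap) (simp only: smult_sum_right)
  also have "\<dots> = (\<Sum>k0\<in>{1..n}. smult (Mstar_pop q i k0) (Momega l w k0))"
  proof (rule sum.cong[OF refl])
    fix k0 assume "k0 \<in> {1..n}"
    thus "smult (Mstar_pop q i k0) (\<Sum>t<length w. X t k0) = smult (Mstar_pop q i k0) (Momega l w k0)"
      using Cons.IH[of k0] by (simp only: X_def)
  qed
  also have "Momega l [q] i + \<dots> = Momega l (q # w) i"
    by (rule Momega_Cons[OF Cons.prems, symmetric])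
  finally show ?case by (rule sym)
qed

lemma sum_AM_Momega_eq_esum:
  "(\<Sum>p'\<in>UNIV. \<Sum>k\<in>{1..n}. smult (AM csS n M p p' i k) (Momega l [p'] k))
    = esum csV cenc (\<lambda>\<pi>. \<Sum>t<length \<pi>. \<Sum>k\<in>{1..n}.
        smult (mprod n (M [p] \<pi> # map Mstar_pop (take t \<pi>)) i k) (Momega l [\<pi> ! t] k)) UNIV"
proof -
  define G where "G x = mprod n (M [p] (fst x) # map Mstar_pop (take (snd x - 1) (fst x)))"
    for x :: "'g list \<times> nat"
  define H where "H x = (\<Sum>k\<in>{1..n}. smult (G x i k) (Momega l [fst x ! (snd x - 1)] k))" for x
  define D where "D p' = {(\<pi>, t). \<pi> \<noteq> [] \<and> 1 \<le> t \<and> t \<le> length \<pi> \<and> \<pi> ! (t - 1) = p'}" for p' :: 'g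
  have "AM csS n M p p' i k = esum csS cenc (\<lambda>x. G x i k) (D p')" for p' k
    unfolding AM_def Csum_eq_esum[OF complete_monoid_S] D_def G_def by (simp add: case_prod_beta')
  hence "(\<Sum>p'\<in>UNIV. \<Sum>k\<in>{1..n}. smult (AM csS n M p p' i k) (Momega l [p'] k))
      = (\<Sum>p'\<in>UNIV. esum csV cenc (\<lambda>x. \<Sum>k\<in>{1..n}. smult (G x i k) (Momega l [p'] k)) (D p'))"
    by (simp add: smult_esum_left esum_sum_commute[OF complete_monoid_V])
  also have "\<dots> = (\<Sum>p'\<in>UNIV. esum csV cenc H (D p'))"
    by (intro sum.cong refl esum_cong[OF complete_monoid_V]) (auto simp: H_def D_def)
  also have "\<dots> = esum csV cenc H (\<Union>p'. D p')"
    by (simp add: esum_eq_sum[OF complete_monoid_V] inj_on_cenc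
          esum_UN_disjoint[OF complete_monoid_V inj_on_cenc inj_on_cenc] D_def disjoint_iff)
  also have "(\<Union>p'. D p') = Sigma UNIV (\<lambda>\<pi>. {1..length \<pi>})"
    by (auto simp: D_def)
  also have "esum csV cenc H \<dots> = esum csV cenc (\<lambda>\<pi>. \<Sum>t\<in>{1..length \<pi>}. H (\<pi>, t)) UNIV"
    by (simp add: esum_Sigma[OF complete_monoid_V] esum_eq_sum[OF complete_monoid_V] inj_on_cenc)
  finally show ?thesis
    by (simp add: sum.atLeast1_atMost_eq H_def G_def)
qed

lemma Momega_eq_sum_AM:
  assumes i: "i \<in> {1..n}"
  shows "Momega l [p] i = (\<Sum>p'\<in>UNIV. \<Sum>k\<in>{1..n}. smult (AM csS n M p p' i k) (Momega l [p'] k))"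
proof -
  have "Momega l [p] i = esum csV cenc (\<lambda>\<pi>. \<Sum>k0\<in>{1..n}. smult (M [p] \<pi> i k0) (Momega l \<pi> k0)) UNIV"
    by (simp add: Momega_unfold[of l "[p]"] esum_Sigma[OF complete_monoid_V]
          esum_eq_sum[OF complete_monoid_V] inj_on_cenc)
  also have "\<dots> = esum csV cenc (\<lambda>\<pi>. \<Sum>t<length \<pi>. \<Sum>k\<in>{1..n}.
        smult (mprod n (M [p] \<pi> # map Mstar_pop (take t \<pi>)) i k) (Momega l [\<pi> ! t] k)) UNIV"
  proof (rule esum_cong[OF complete_monoid_V])
    fix \<pi> :: "'g list"
    define X where "X t k0 = (\<Sum>k\<in>{1..n}. smult (mprod n (map Mstar_pop (take t \<pi>)) k0 k) (Momega l [\<pi> ! t] k))"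
      for t k0
    have "(\<Sum>k0\<in>{1..n}. smult (M [p] \<pi> i k0) (Momega l \<pi> k0))
        = (\<Sum>k0\<in>{1..n}. smult (M [p] \<pi> i k0) (\<Sum>t<length \<pi>. X t k0))"
      unfolding X_def by (rule sum.cong[OF refl], rule arg_cong[OF Momega_stack])
    also have "\<dots> = (\<Sum>t<length \<pi>. \<Sum>k0\<in>{1..n}. smult (M [p] \<pi> i k0) (X t k0))"
      by (simp only: smult_sum_right) (rule sum.swap)
    finally show "(\<Sum>k0\<in>{1..n}. smult (M [p] \<pi> i k0) (Momega l \<pi> k0)) = (\<Sum>t<length \<pi>. \<Sum>k\<in>{1..n}.
        smult (mprod n (M [p] \<pi> # map Mstar_pop (take t \<pi>)) i k) (Momega l [\<pi> ! t] k))"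
      by (simp only: sum_smult_mprod_Cons X_def)
  qed
  finally show ?thesis by (simp only: sum_AM_Momega_eq_esum)
qed

end

theorem theorem6:
  fixes csS :: "(ix \<Rightarrow> 's::semiring_1) \<Rightarrow> ix set \<Rightarrow> 's"
    and csV :: "(ix \<Rightarrow> 'v::comm_monoid_add) \<Rightarrow> ix set \<Rightarrow> 'v"
    and smult :: "'s \<Rightarrow> 'v \<Rightarrow> 'v"
    and infprod :: "(nat \<Rightarrow> 's) \<Rightarrow> 'v"
    and n :: nat
    and M :: "'g::finite list \<Rightarrow> 'g list \<Rightarrow> nat \<Rightarrow> nat \<Rightarrow> 's"
  assumes "complete_ssp csS csV smult infprod"
    and "n \<ge> 1"
    and "pushdown_tm n M"
  shows "\<forall>p l i. l \<le> n \<longrightarrow> i \<in> {1..n} \<longrightarrow>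
           momega csV infprod n M l [p] i =
           (\<Sum>p'\<in>(UNIV :: 'g set). \<Sum>k\<in>{1..n}.
              smult (AM csS n M p p' i k) (momega csV infprod n M l [p'] k))"
proof -
  interpret pushdown_system csS csV smult infprod n M
    using assms(1,3) by unfold_locales
  show ?thesis using Momega_eq_sum_AM by blast
qed

end
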